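(* Let $\Omega=\{x_i:i\in\mathbb N\}\cup\{a_j:j\in\mathbb N\}$, $\mathbb G$, $\mathbb D$, $\mathbb C$, $\mathbb S$, $\mathbb R_X$ be as in the context. Then: (1) $\mathbb S$ is a $\mathbb C$-saturated set; (2) each $\mathbb R_X$ is saturated; (3) for each propositional variable $X$, $\mathbb R_X=\{a_j:(a_j:X)\in\mathbb D\}\leadsto\mathbb S$ (each $a_j$ viewed as a one-element sequence); (4) $\mathbb M=\langle\mathbb C,\mathbb S,(\mathbb R_X)_{X\in\mathcal P}\rangle$ is a model.
   Context: $\lambda\mu$-terms: $t::= x\mid \lambda x.t\mid (t\;t)\mid \mu a.t\mid (a\;t)$ over disjoint infinite sets of $\lambda$-variables and $\mu$-variables; types built from the set $\mathcal P$ of propositional variables and $\perp$ with $\to$. Reduction $(\lambda x.u\;v)\triangleright u[x:=v]$, $(\mu a.u\;v)\triangleright\mu a.u[a:=^*v]$ ($u[a:=^*v]$ replaces each subterm $(a\;w)$ of $u$ by $(a\;(w\;v))$), $\triangleright^*$ reflexive transitive compatible closure. Typing rules for $\Gamma\vdash t:A;\Delta$: (ax) $\Gamma\vdash x:A;\Delta$ if $x:A\in\Gamma$; ($\to_i$), ($\to_e$) as usual; ($\mu$) from $\Gamma\vdash t:\perp;\Delta,a:A$ infer $\Gamma\vdash\mu a.t:A;\Delta$; ($\perp$) from $\Gamma\vdash t:A;\Delta,a:A$ infer $\Gamma\vdash(a\;t):\perp;\Delta,a:A$. Term model: $\Omega=\{x_i\}_{i\in\mathbb N}\cup\{a_j\}_{j\in\mathbb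 N}$ is an enumeration of infinite sets of $\lambda$- and $\mu$-variables; $(A_i)_{i\in\mathbb N}$ enumerates all types, each type occurring infinitely often; $(B_j)_{j\in\mathbb N}$ enumerates all types with $\perp$ occurring infinitely often. $\mathbb G=\{x_i:A_i\}$, $\mathbb D=\{a_j:B_j\}$. For a term $u$ with free variables in $\Omega$, $\mathbb G\vdash u:C;\mathbb D$ means $\mathbb G_u\vdash u:C;\mathbb D_u$ where $\mathbb G_u,\mathbb D_u$ are the restrictions to the free variables of $u$; $\mathbb G\vdash^* u:C;\mathbb D$ means there is $u'$ with $u\triangleright^*u'$ and $\mathbb G\vdash u':C;\mathbb D$. $\mathbb C=\{a_j:(a_j:\perp)\in\mathbb D\}$, $\mathbb S=\{t:\mathbb G\vdash^*t:\perp;\mathbb D\}$, $\mathbb R_X=\{t:\mathbb G\vdash^*t:X;\mathbb D\}$. Semantic notions: $\mathcal S$ saturated if $v\triangleright^*u\in\mathcal S$ implies $v\in\mathcal S$; $\mathcal C$-saturated (for an infinite set $\mathcal C$ of $\mu$-variables) if saturated and $t\in\mathcal S$ implies $\mu a.t,(a\;t)\in\mathcal S$ for $a\in\mathcal C$. $\mathcal T'$ = terms $\cup$ $\mu$-variables; for $\pi\in\mathcal T'^{<\omega}$: $(t\;\emptyset)=t$, $(t\;u\pi')=((t\;u)\;\pi')$, $(t\;a\pi')=((a\;t)\;\pi')$; $\mathcal X\leadsto\mathcal S=\{t:(t\;\pi)\in\mathcal S\ \forall\pi\in\mathcal X\}$ for $\mathcal X\subseteq\mathcal T'^{<\omega}$;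 $\mathcal K\leadsto\mathcal L=\{t:(t\;u)\in\mathcal L\ \forall u\in\mathcal K\}$ for sets of terms. A model $\langle\mathcal C,\mathcal S,\{\mathcal R_i\}\rangle$ consists of a $\mathcal C$-saturated $\mathcal S$ and sets $\mathcal R_i=\mathcal X_i\leadsto\mathcal S$ with $\mathcal X_i\subseteq\mathcal T'^{<\omega}$ (the model being the smallest family containing $\mathcal S$, the $\mathcal R_i$, closed under $\leadsto$). *)

theory Defs
  imports Main
begin

datatype ty = PVar nat | Bot | Arr ty ty

text \<open>Terms with two separate de Bruijn index spaces: Var i is a lambda-variable,
  Named n t is (a t) for a mu-variable a; Lam binds lambda-index 0, Mu binds mu-index 0.
  A free lambda-variable x_i (resp. mu-variable a_j) is represented, at binder depth 0,
  by the index i (resp. j).\<close>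
datatype trm = Var nat | Lam trm | App trm trm | Mu trm | Named nat trm

fun lift_lam :: "nat \<Rightarrow> trm \<Rightarrow> trm" where
  "lift_lam k (Var i) = Var (if i < k then i else Suc i)"
| "lift_lam k (Lam t) = Lam (lift_lam (Suc k) t)"
| "lift_lam k (App t u) = App (lift_lam k t) (lift_lam k u)"
| "lift_lam k (Mu t) = Mu (lift_lam k t)"
| "lift_lam k (Named n t) = Named n (lift_lam k t)"

fun lift_mu :: "nat \<Rightarrow> trm \<Rightarrow> trm" where
  "lift_mu k (Var i) = Var i"
| "lift_mu k (Lam t) = Lam (lift_mu k t)"
| "lift_mu k (App t u) = App (lift_mu k t) (lift_mu k u)"
| "lift_mu k (Mu t) = Mu (lift_mu (Suc k) t)"
| "lift_mu k (Named n t) = Named (if n < k then n else Suc n) (lift_mu k t)"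

text \<open>u[x:=s] for the lambda-index k (and decrement of the indices above k).\<close>
fun subst_lam :: "trm \<Rightarrow> nat \<Rightarrow> trm \<Rightarrow> trm" where
  "subst_lam (Var i) k s = (if i < k then Var i else if i = k then s else Var (i - 1))"
| "subst_lam (Lam t) k s = Lam (subst_lam t (Suc k) (lift_lam 0 s))"
| "subst_lam (App t u) k s = App (subst_lam t k s) (subst_lam u k s)"
| "subst_lam (Mu t) k s = Mu (subst_lam t k (lift_mu 0 s))"
| "subst_lam (Named n t) k s = Named n (subst_lam t k s)"

text \<open>u[a:=* v] for the mu-index k: each (a w) becomes (a (w v)).\<close>
fun subst_mu :: "trm \<Rightarrow> nat \<Rightarrow> trm \<Rightarrow> trm" where
  "subst_mu (Var i) k v = Var i"
| "subst_mu (Lam t) k v = Lam (subst_mu t k (lift_lam 0 v))"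
| "subst_mu (App t u) k v = App (subst_mu t k v) (subst_mu u k v)"
| "subst_mu (Mu t) k v = Mu (subst_mu t (Suc k) (lift_mu 0 v))"
| "subst_mu (Named n t) k v =
     (if n = k then Named n (App (subst_mu t k v) v) else Named n (subst_mu t k v))"

inductive red1 :: "trm \<Rightarrow> trm \<Rightarrow> bool" where
  beta: "red1 (App (Lam u) v) (subst_lam u 0 v)"
| mu: "red1 (App (Mu u) v) (Mu (subst_mu u 0 (lift_mu 0 v)))"
| lam: "red1 t t' \<Longrightarrow> red1 (Lam t) (Lam t')"
| appL: "red1 t t' \<Longrightarrow> red1 (App t u) (App t' u)"
| appR: "red1 u u' \<Longrightarrow> red1 (App t u) (App t u')"
| muC: "red1 t t' \<Longrightarrow> red1 (Mu t) (Mu t')"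
| named: "red1 t t' \<Longrightarrow> red1 (Named n t) (Named n t')"

abbreviation red :: "trm \<Rightarrow> trm \<Rightarrow> bool" where
  "red \<equiv> red1\<^sup>*\<^sup>*"

definition cons_ctx :: "ty \<Rightarrow> (nat \<Rightarrow> ty option) \<Rightarrow> nat \<Rightarrow> ty option" where
  "cons_ctx A \<Gamma> = (\<lambda>i. case i of 0 \<Rightarrow> Some A | Suc j \<Rightarrow> \<Gamma> j)"

inductive typed :: "(nat \<Rightarrow> ty option) \<Rightarrow> trm \<Rightarrow> ty \<Rightarrow> (nat \<Rightarrow> ty option) \<Rightarrow> bool" where
  ax: "\<Gamma> i = Some A \<Longrightarrow> typed \<Gamma> (Var i) A \<Delta>"
| arr_i: "typed (cons_ctx A \<Gamma>) t B \<Delta> \<Longrightarrow> typed \<Gamma> (Lam t) (Arr A B) \<Delta>"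
| arr_e: "typed \<Gamma> t (Arr A B) \<Delta> \<Longrightarrow> typed \<Gamma> u A \<Delta> \<Longrightarrow> typed \<Gamma> (App t u) B \<Delta>"
| mu: "typed \<Gamma> t Bot (cons_ctx A \<Delta>) \<Longrightarrow> typed \<Gamma> (Mu t) A \<Delta>"
| bot: "\<Delta> n = Some A \<Longrightarrow> typed \<Gamma> t A \<Delta> \<Longrightarrow> typed \<Gamma> (Named n t) Bot \<Delta>"

text \<open>Free lambda- and mu-variables (names at depth 0), computed at binder depth k.\<close>
fun fvl :: "nat \<Rightarrow> trm \<Rightarrow> nat set" where
  "fvl k (Var i) = (if k \<le> i then {i - k} else {})"
| "fvl k (Lam t) = fvl (Suc k) t"
| "fvl k (App t u) = fvl k t \<union> fvl k u"
| "fvl k (Mu t) = fvl k t"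
| "fvl k (Named n t) = fvl k t"

fun fvm :: "nat \<Rightarrow> trm \<Rightarrow> nat set" where
  "fvm k (Var i) = {}"
| "fvm k (Lam t) = fvm k t"
| "fvm k (App t u) = fvm k t \<union> fvm k u"
| "fvm k (Mu t) = fvm (Suc k) t"
| "fvm k (Named n t) = (if k \<le> n then {n - k} else {}) \<union> fvm k t"

definition restr :: "(nat \<Rightarrow> ty option) \<Rightarrow> nat set \<Rightarrow> nat \<Rightarrow> ty option" where
  "restr \<Gamma> V = (\<lambda>i. if i \<in> V then \<Gamma> i else None)"

text \<open>\<bbbG> = {x_i : A i}, \<bbbD> = {a_j : B j}.\<close>
definition GG :: "(nat \<Rightarrow> ty) \<Rightarrow> nat \<Rightarrow> ty option" where
  "GG A = (\<lambda>i. Some (A i))"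

definition DD :: "(nat \<Rightarrow> ty) \<Rightarrow> nat \<Rightarrow> ty option" where
  "DD B = (\<lambda>j. Some (B j))"

text \<open>\<bbbG> |- u : C ; \<bbbD>, i.e. \<bbbG>_u |- u : C ; \<bbbD>_u.\<close>
definition typed_GD :: "(nat \<Rightarrow> ty) \<Rightarrow> (nat \<Rightarrow> ty) \<Rightarrow> trm \<Rightarrow> ty \<Rightarrow> bool" where
  "typed_GD A B u C = typed (restr (GG A) (fvl 0 u)) u C (restr (DD B) (fvm 0 u))"

definition typed_GD_star :: "(nat \<Rightarrow> ty) \<Rightarrow> (nat \<Rightarrow> ty) \<Rightarrow> trm \<Rightarrow> ty \<Rightarrow> bool" where
  "typed_GD_star A B u C = (\<exists>u'. red u u' \<and> typed_GD A B u' C)"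

definition CC :: "(nat \<Rightarrow> ty) \<Rightarrow> nat set" where
  "CC B = {j. B j = Bot}"

definition SS :: "(nat \<Rightarrow> ty) \<Rightarrow> (nat \<Rightarrow> ty) \<Rightarrow> trm set" where
  "SS A B = {t. typed_GD_star A B t Bot}"

definition RR :: "(nat \<Rightarrow> ty) \<Rightarrow> (nat \<Rightarrow> ty) \<Rightarrow> nat \<Rightarrow> trm set" where
  "RR A B X = {t. typed_GD_star A B t (PVar X)}"

definition saturated :: "trm set \<Rightarrow> bool" where
  "saturated S \<longleftrightarrow> (\<forall>v u. red v u \<and> u \<in> S \<longrightarrow> v \<in> S)"

text \<open>\<mu>a.t for a free mu-variable a: bind the free name a.\<close>
fun close_mu :: "nat \<Rightarrow> nat \<Rightarrow> trm \<Rightarrow> trm" where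
  "close_mu a k (Var i) = Var i"
| "close_mu a k (Lam t) = Lam (close_mu a k t)"
| "close_mu a k (App t u) = App (close_mu a k t) (close_mu a k u)"
| "close_mu a k (Mu t) = Mu (close_mu a (Suc k) t)"
| "close_mu a k (Named n t) =
     Named (if n < k then n else if n = a + k then k else Suc n) (close_mu a k t)"

definition mu_abs :: "nat \<Rightarrow> trm \<Rightarrow> trm" where
  "mu_abs a t = Mu (close_mu a 0 t)"

definition C_saturated :: "nat set \<Rightarrow> trm set \<Rightarrow> bool" where
  "C_saturated C S \<longleftrightarrow> infinite C \<and> saturated S \<and>
     (\<forall>t \<in> S. \<forall>a \<in> C. mu_abs a t \<in> S \<and> Named a t \<in> S)"

text \<open>\<T>' = terms \<union> mu-variables; stacks are finite lists over \<T>'.\<close>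
datatype elt = Tm trm | MuV nat

fun app_stack :: "trm \<Rightarrow> elt list \<Rightarrow> trm" where
  "app_stack t [] = t"
| "app_stack t (Tm u # \<pi>) = app_stack (App t u) \<pi>"
| "app_stack t (MuV a # \<pi>) = app_stack (Named a t) \<pi>"

definition arrow_set :: "elt list set \<Rightarrow> trm set \<Rightarrow> trm set" (infixr "\<leadsto>" 60) where
  "\<X> \<leadsto> S = {t. \<forall>\<pi> \<in> \<X>. app_stack t \<pi> \<in> S}"

definition is_model :: "nat set \<Rightarrow> trm set \<Rightarrow> ('i \<Rightarrow> trm set) \<Rightarrow> bool" where
  "is_model C S R \<longleftrightarrow> C_saturated C S \<and> (\<forall>i. \<exists>\<X>. R i = \<X> \<leadsto> S)"

end

theory Submission
  imports Defs
begin

text \<open>Membership in \<open>\<bbbS>\<close> and \<open>\<bbbR>\<^sub>X\<close> is typability up to reduction in the full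
  contexts \<open>\<bbbG>, \<bbbD>\<close>, so saturation is just transitivity of reduction. Every reduct of
  \<open>(a t)\<close> is \<open>(a t')\<close> with \<open>t \<triangleright>\<^sup>* t'\<close>, hence \<open>(a t) \<in> \<bbbS>\<close> iff \<open>t\<close> reduces to a term of type
  \<open>B a\<close>; this gives closure of \<open>\<bbbS>\<close> under \<open>(a _)\<close> for \<open>a \<in> \<bbbC>\<close> and, using surjectivity of
  \<open>B\<close> to find a \<open>\<mu>\<close>-variable of type \<open>X\<close>, the identity \<open>\<bbbR>\<^sub>X = {a : B a = X} \<leadsto> \<bbbS>\<close>.
  Closure under \<open>\<mu>a._\<close> holds because \<open>\<mu>a.t\<close> is \<open>t\<close> with the free name \<open>a : \<bottom>\<close> renamed to
  the bound one, and typing and reduction are stable under injective renaming.\<close>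

definition up_ren :: "(nat \<Rightarrow> nat) \<Rightarrow> nat \<Rightarrow> nat" where
  "up_ren g = (\<lambda>n. case n of 0 \<Rightarrow> 0 | Suc m \<Rightarrow> Suc (g m))"

fun rename_mu :: "(nat \<Rightarrow> nat) \<Rightarrow> trm \<Rightarrow> trm" where
  "rename_mu g (Var i) = Var i"
| "rename_mu g (Lam t) = Lam (rename_mu g t)"
| "rename_mu g (App t u) = App (rename_mu g t) (rename_mu g u)"
| "rename_mu g (Mu t) = Mu (rename_mu (up_ren g) t)"
| "rename_mu g (Named n t) = Named (g n) (rename_mu g t)"

lemma up_ren_comp: "up_ren g \<circ> up_ren h = up_ren (g \<circ> h)"
  by (rule ext) (simp add: up_ren_def split: nat.split)

lemma up_ren_id: "up_ren id = id"
  by (rule ext) (simp add: up_ren_def split: nat.split)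

lemma inj_up_ren: "inj g \<Longrightarrow> inj (up_ren g)"
  by (auto simp: inj_def up_ren_def split: nat.splits)

lemma rename_mu_comp: "rename_mu g (rename_mu h t) = rename_mu (g \<circ> h) t"
  by (induction t arbitrary: g h) (simp_all add: up_ren_comp[symmetric])

lemma rename_mu_id: "rename_mu id t = t"
  by (induction t) (simp_all add: up_ren_id id_def[symmetric])

lemma lift_mu_eq_rename_mu: "lift_mu k t = rename_mu (\<lambda>n. if n < k then n else Suc n) t"
proof (induction t arbitrary: k)
  case (Mu t)
  have "up_ren (\<lambda>n. if n < k then n else Suc n) = (\<lambda>n. if n < Suc k then n else Suc n)"
    by (rule ext) (simp add: up_ren_def split: nat.split)
  with Mu show ?case by simp
qed simp_all

lemma close_mu_eq_rename_mu:
  "close_mu a k t = rename_mu (\<lambda>n. if n < k then n else if n = a + k then k else Suc n) t"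
proof (induction t arbitrary: k)
  case (Mu t)
  have "up_ren (\<lambda>n. if n < k then n else if n = a + k then k else Suc n)
      = (\<lambda>n. if n < Suc k then n else if n = a + Suc k then Suc k else Suc n)"
    by (rule ext) (simp add: up_ren_def split: nat.split)
  with Mu show ?case by simp
qed simp_all

lemma rename_mu_lift_lam: "rename_mu g (lift_lam k v) = lift_lam k (rename_mu g v)"
  by (induction v arbitrary: k g) simp_all

lemma rename_mu_lift_mu: "rename_mu (up_ren g) (lift_mu 0 v) = lift_mu 0 (rename_mu g v)"
proof -
  have "up_ren g \<circ> Suc = Suc \<circ> g" by (rule ext) (simp add: up_ren_def)
  then show ?thesis by (simp add: lift_mu_eq_rename_mu rename_mu_comp)
qed

lemma rename_mu_subst_lam:
  "rename_mu g (subst_lam u j s) = subst_lam (rename_mu g u) j (rename_mu g s)"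
  by (induction u arbitrary: j s g) (simp_all add: rename_mu_lift_lam rename_mu_lift_mu)

lemma rename_mu_subst_mu:
  "inj g \<Longrightarrow> rename_mu g (subst_mu u j v) = subst_mu (rename_mu g u) (g j) (rename_mu g v)"
proof (induction u arbitrary: j v g)
  case (Mu t)
  have "up_ren g (Suc j) = Suc (g j)" by (simp add: up_ren_def)
  with Mu inj_up_ren[OF Mu.prems] show ?case by (simp add: rename_mu_lift_mu)
next
  case (Named n t)
  then show ?case by (auto simp: inj_eq)
qed (simp_all add: rename_mu_lift_lam)

lemma red1_rename_mu: "red1 t t' \<Longrightarrow> inj g \<Longrightarrow> red1 (rename_mu g t) (rename_mu g t')"
proof (induction arbitrary: g rule: red1.induct)
  case (beta u v)
  then show ?case by (simp add: rename_mu_subst_lam red1.beta)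
next
  case (mu u v)
  have "up_ren g 0 = 0" by (simp add: up_ren_def)
  with inj_up_ren[OF mu] have "rename_mu g (Mu (subst_mu u 0 (lift_mu 0 v)))
      = Mu (subst_mu (rename_mu (up_ren g) u) 0 (lift_mu 0 (rename_mu g v)))"
    by (simp add: rename_mu_subst_mu rename_mu_lift_mu)
  then show ?case by (simp add: red1.mu)
qed (auto intro: red1.intros inj_up_ren)

lemma red_rename_mu: "red t t' \<Longrightarrow> inj g \<Longrightarrow> red (rename_mu g t) (rename_mu g t')"
  by (induction rule: rtranclp_induct) (auto intro: rtranclp.rtrancl_into_rtrancl red1_rename_mu)

lemma red_Mu: "red t t' \<Longrightarrow> red (Mu t) (Mu t')"
  by (induction rule: rtranclp_induct) (auto intro: rtranclp.rtrancl_into_rtrancl red1.muC)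

lemma red_Named: "red t t' \<Longrightarrow> red (Named a t) (Named a t')"
  by (induction rule: rtranclp_induct) (auto intro: rtranclp.rtrancl_into_rtrancl red1.named)

lemma red_NamedE:
  assumes "red (Named a t) u"
  obtains t' where "u = Named a t'" and "red t t'"
proof -
  from assms have "\<exists>t'. u = Named a t' \<and> red t t'"
  proof (induction rule: rtranclp_induct)
    case (step y z)
    then obtain t' where "y = Named a t'" "red t t'" by auto
    with step.hyps(2) show ?case
      by (auto elim: red1.cases intro: rtranclp.rtrancl_into_rtrancl)
  qed auto
  with that show thesis by blast
qed

lemma typed_rename_mu:
  assumes "typed \<Gamma> t C \<Delta>"
    and "\<And>i T. \<Gamma> i = Some T \<Longrightarrow> \<Gamma>' i = Some T"
    and "\<And>n T. \<Delta> n = Some T \<Longrightarrow> \<Delta>' (g n) = Some T"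
  shows "typed \<Gamma>' (rename_mu g t) C \<Delta>'"
  using assms
proof (induction arbitrary: \<Gamma>' \<Delta>' g rule: typed.induct)
  case (arr_i A \<Gamma> t B \<Delta>)
  have "cons_ctx A \<Gamma>' i = Some T" if "cons_ctx A \<Gamma> i = Some T" for i T
    using that arr_i.prems(1) by (auto simp: cons_ctx_def split: nat.splits)
  with arr_i show ?case by (auto intro: typed.arr_i)
next
  case (arr_e \<Gamma> t A B \<Delta> u)
  have "typed \<Gamma>' (rename_mu g t) (Arr A B) \<Delta>'" and "typed \<Gamma>' (rename_mu g u) A \<Delta>'"
    using arr_e.prems by (auto intro!: arr_e.IH)
  then show ?case by (auto intro: typed.arr_e)
next
  case (mu \<Gamma> t A \<Delta>)
  have "cons_ctx A \<Delta>' (up_ren g n) = Some T" if "cons_ctx A \<Delta> n = Some T" for n T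
    using that mu.prems(2) by (auto simp: cons_ctx_def up_ren_def split: nat.splits)
  with mu show ?case by (auto intro: typed.mu)
qed (auto intro: typed.ax typed.bot)

lemma fvl_Suc_iff: "i \<in> fvl (Suc k) t \<longleftrightarrow> Suc i \<in> fvl k t"
  by (induction t arbitrary: k) auto

lemma fvm_Suc_iff: "i \<in> fvm (Suc k) t \<longleftrightarrow> Suc i \<in> fvm k t"
  by (induction t arbitrary: k) auto

lemma typed_cong_free_vars:
  assumes "typed \<Gamma> t C \<Delta>"
    and "\<And>i. i \<in> fvl 0 t \<Longrightarrow> \<Gamma>' i = \<Gamma> i"
    and "\<And>n. n \<in> fvm 0 t \<Longrightarrow> \<Delta>' n = \<Delta> n"
  shows "typed \<Gamma>' t C \<Delta>'"
  using assms
proof (induction arbitrary: \<Gamma>' \<Delta>' rule: typed.induct)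
  case (arr_i A \<Gamma> t B \<Delta>)
  have "cons_ctx A \<Gamma>' i = cons_ctx A \<Gamma> i" if "i \<in> fvl 0 t" for i
    using that arr_i.prems(1) fvl_Suc_iff[of _ 0 t] by (auto simp: cons_ctx_def split: nat.split)
  with arr_i show ?case by (auto intro: typed.arr_i)
next
  case (arr_e \<Gamma> t A B \<Delta> u)
  have "typed \<Gamma>' t (Arr A B) \<Delta>'" and "typed \<Gamma>' u A \<Delta>'"
    using arr_e.prems by (auto intro!: arr_e.IH)
  then show ?case by (rule typed.arr_e)
next
  case (mu \<Gamma> t A \<Delta>)
  have "cons_ctx A \<Delta>' n = cons_ctx A \<Delta> n" if "n \<in> fvm 0 t" for n
    using that mu.prems(2) fvm_Suc_iff[of _ 0 t] by (auto simp: cons_ctx_def split: nat.split)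
  with mu show ?case by (auto intro: typed.mu)
qed (auto intro: typed.ax typed.bot)

lemma typed_GD_iff: "typed_GD A B u C \<longleftrightarrow> typed (GG A) u C (DD B)"
proof
  assume "typed_GD A B u C"
  then have "typed (GG A) (rename_mu id u) C (DD B)"
    unfolding typed_GD_def
    by (rule typed_rename_mu) (auto simp: restr_def GG_def DD_def split: if_splits)
  then show "typed (GG A) u C (DD B)" by (simp add: rename_mu_id)
next
  assume "typed (GG A) u C (DD B)"
  from typed_cong_free_vars[OF this] show "typed_GD A B u C"
    by (auto simp: typed_GD_def restr_def)
qed

lemma typed_GD_star_iff:
  "typed_GD_star A B t C \<longleftrightarrow> (\<exists>u. red t u \<and> typed (GG A) u C (DD B))"
  by (simp add: typed_GD_star_def typed_GD_iff)

lemma saturated_typed_GD_star: "saturated {t. typed_GD_star A B t C}"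
  unfolding saturated_def typed_GD_star_iff by (auto intro: rtranclp_trans)

lemma Named_mem_SS_iff: "Named a t \<in> SS A B \<longleftrightarrow> typed_GD_star A B t (B a)"
proof
  assume "Named a t \<in> SS A B"
  then obtain u where u: "red (Named a t) u" "typed (GG A) u Bot (DD B)"
    by (auto simp: SS_def typed_GD_star_iff)
  from u(1) obtain t' where "u = Named a t'" "red t t'" by (rule red_NamedE)
  with u(2) show "typed_GD_star A B t (B a)"
    by (auto elim: typed.cases simp: typed_GD_star_iff DD_def)
next
  assume "typed_GD_star A B t (B a)"
  then obtain u where "red t u" "typed (GG A) u (B a) (DD B)" by (auto simp: typed_GD_star_iff)
  then show "Named a t \<in> SS A B"
    by (auto simp: SS_def typed_GD_star_iff DD_def intro!: red_Named typed.bot)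
qed

lemma mu_abs_mem_SS:
  assumes "t \<in> SS A B" and "B a = Bot"
  shows "mu_abs a t \<in> SS A B"
proof -
  obtain u where u: "red t u" "typed (GG A) u Bot (DD B)"
    using assms(1) by (auto simp: SS_def typed_GD_star_iff)
  define g where "g = (\<lambda>n::nat. if n = a then 0 else Suc n)"
  have "inj g" by (auto simp: g_def inj_def split: if_splits)
  have "mu_abs a t = Mu (rename_mu g t)"
    by (simp add: mu_abs_def close_mu_eq_rename_mu g_def)
  moreover have "red (Mu (rename_mu g t)) (Mu (rename_mu g u))"
    using red_rename_mu[OF u(1) \<open>inj g\<close>] by (rule red_Mu)
  moreover have "typed (GG A) (rename_mu g u) Bot (cons_ctx Bot (DD B))"
    by (rule typed_rename_mu[OF u(2)]) (auto simp: g_def cons_ctx_def DD_def assms(2))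
  ultimately show ?thesis
    by (auto simp: SS_def typed_GD_star_iff intro: typed.mu)
qed

lemma C_saturated_SS:
  assumes "infinite {j. B j = Bot}"
  shows "C_saturated (CC B) (SS A B)"
proof -
  have "saturated (SS A B)"
    using saturated_typed_GD_star[of A B Bot] by (simp add: SS_def)
  moreover have "Named a t \<in> SS A B" if "t \<in> SS A B" and "B a = Bot" for a t
    using that unfolding Named_mem_SS_iff by (simp add: SS_def)
  ultimately show ?thesis
    using assms by (auto simp: C_saturated_def CC_def mu_abs_mem_SS)
qed

lemma RR_eq_arrow_SS:
  assumes "surj B"
  shows "RR A B X = ((\<lambda>j. [MuV j]) ` {j. B j = PVar X}) \<leadsto> SS A B"
proof -
  obtain a where "B a = PVar X" using assms by (metis surjD)
  then show ?thesis
    by (auto simp: arrow_set_def RR_def Named_mem_SS_iff)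
qed

theorem mainTheorem11:
  fixes A B :: "nat \<Rightarrow> ty"
  assumes "\<forall>T. infinite {i. A i = T}"
    and "surj B"
    and "infinite {j. B j = Bot}"
  shows "C_saturated (CC B) (SS A B)
       \<and> (\<forall>X. saturated (RR A B X))
       \<and> (\<forall>X. RR A B X = ((\<lambda>j. [MuV j]) ` {j. B j = PVar X}) \<leadsto> SS A B)
       \<and> is_model (CC B) (SS A B) (RR A B)"
proof -
  have S: "C_saturated (CC B) (SS A B)" using assms(3) by (rule C_saturated_SS)
  have R: "saturated (RR A B X)" for X
    using saturated_typed_GD_star[of A B "PVar X"] by (simp add: RR_def)
  have arrow: "RR A B X = ((\<lambda>j. [MuV j]) ` {j. B j = PVar X}) \<leadsto> SS A B" for X
    using assms(2) by (rule RR_eq_arrow_SS)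
  have "is_model (CC B) (SS A B) (RR A B)"
    unfolding is_model_def using S arrow by blast
  with S R arrow show ?thesis by blast
qed

end
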